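(* Let $\alpha,\beta\in\mathbb{R}_{\ge1}$ be such that $\alpha/\beta$ is irrational. Then, as $T\to\infty$, \[ \mathbb{P}_T\big(\mathcal{N}_\alpha\cap\mathcal{N}_\beta\big) \sim \mathbb{P}_T\big(\mathcal{N}_\alpha\big)\mathbb{P}_T\big(\mathcal{N}_\beta\big). \]
   Context: $P^-(n)$ denotes the smallest prime factor of $n\in\mathbb{N}$, with $P^-(1)=\infty$. For $\alpha\ge1$, $\mathcal{N}_\alpha=\bigcup_{n\in\mathbb{N},\ P^-(n)>\alpha}(n\alpha-\tfrac12,n\alpha+\tfrac12)$. For $T>0$ and a Lebesgue-measurable set $\mathcal{S}\subseteq\mathbb{R}$, $\mathbb{P}_T(\mathcal{S})=\mathrm{meas}(\mathcal{S}\cap[0,T])/T$, where $\mathrm{meas}$ is Lebesgue measure. $f\sim g$ means $f/g\to1$. *)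

theory Defs
  imports "HOL-Analysis.Analysis" "HOL-Computational_Algebra.Primes" "HOL-Library.Landau_Symbols"
begin

text \<open>Smallest prime factor of n, with value infinity for n = 1 (and, by convention, for n = 0,
  which never matters since only n >= 1 is used).\<close>
definition Pminus :: "nat \<Rightarrow> ereal" where
  "Pminus n = (if n \<le> 1 then \<infinity> else ereal (real (Min (prime_factors n))))"

definition Nset :: "real \<Rightarrow> real set" where
  "Nset \<alpha> = (\<Union>n \<in> {n. n \<ge> 1 \<and> Pminus n > ereal \<alpha>}.
                {real n * \<alpha> - 1/2 <..< real n * \<alpha> + 1/2})"

definition PT :: "real \<Rightarrow> real set \<Rightarrow> real" where
  "PT T S = measure lebesgue (S \<inter> {0..T}) / T"

end

(*
  The window of length \<alpha> around the k-th multiple k\<alpha> meets N_\<alpha> exactly when P^-(k) > \<alpha>,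
  a condition periodic in k modulo the primorial P_\<alpha> of the primes up to \<alpha>. Hence the mass
  of N_\<alpha> \<inter> N_\<beta> in that window is w(k) G(k\<alpha>), where w is this sieve indicator and G(x) is
  the mass of N_\<beta> in the unit window around x, a Lipschitz function of period P_\<beta> \<beta>. Since
  \<alpha>/\<beta> is irrational, so is P_\<alpha> \<alpha> / (P_\<beta> \<beta>), and a Weyl-type equidistribution argument
  (Dirichlet approximation instead of Fourier analysis) shows that the averages of w(k) G(k\<alpha>)
  tend to mean(w) mean(G). Running the same argument with step 1 when \<beta> is irrational
  identifies mean(G) with the density of N_\<beta>; by symmetry one may assume \<beta> irrational.
*)
theory Submission
  imports Defs "HOL-Library.Periodic_Fun" "HOL-Real_Asymp.Real_Asymp"
begin

section \<open>Equidistribution of weighted orbit means\<close>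

lemma irrational_multiples_uniformly_dense:
  fixes A B \<epsilon> :: real
  assumes irr: "A / B \<notin> \<rat>" and B: "B > 0" and \<epsilon>: "\<epsilon> > 0"
  obtains J :: nat where "\<And>x. \<exists>j<J. \<exists>i::int. \<bar>x - real j * A - of_int i * B\<bar> \<le> \<epsilon>"
proof -
  obtain N :: nat where N_big: "B / \<epsilon> < N" using reals_Archimedean2 by blast
  have "0 < B / \<epsilon>" using B \<epsilon> by simp
  then have "real N > 0" using N_big by linarith
  then have N: "N > 0" "B / N < \<epsilon>"
    using N_big \<epsilon> by (simp_all add: pos_divide_less_eq mult.commute)
  obtain p q where q: "0 < q" and qp: "\<bar>of_int q * (A / B) - of_int p\<bar> < 1 / N"
    using Dirichlet_approx[OF N(1)] by blast
  define \<delta> where "\<delta> = of_int q * A - of_int p * B"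
  have "\<bar>\<delta>\<bar> = B * \<bar>of_int q * (A / B) - of_int p\<bar>"
    using B by (simp add: \<delta>_def abs_mult[symmetric] field_simps)
  also have "\<dots> < B / N" using qp B by (simp add: field_simps)
  finally have \<delta>_small: "\<bar>\<delta>\<bar> < \<epsilon>" using N(2) by linarith
  have \<delta>_nz: "\<delta> \<noteq> 0"
  proof
    assume "\<delta> = 0"
    then have "A / B = of_int p / of_int q" using B q by (simp add: \<delta>_def field_simps)
    then show False using irr by simp
  qed
  \<comment> \<open>The multiples of \<open>\<delta> = qA - pB\<close>, a nonzero number smaller than \<open>\<epsilon>\<close>, form an \<open>\<epsilon>\<close>-net
    of every period interval.\<close>
  define K where "K = nat \<lceil>B / \<bar>\<delta>\<bar>\<rceil>"
  show thesis
  proof (rule that[of "nat q * K + 1"])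
    fix x :: real
    define z where "z = B * frac (x / B) - (if \<delta> > 0 then 0 else B)"
    have z: "\<bar>z\<bar> \<le> B" "0 \<le> z / \<delta>"
      using B frac_lt_1[of "x / B"] frac_ge_0[of "x / B"]
      by (auto simp: z_def zero_le_divide_iff)
    have "z / \<delta> = \<bar>z\<bar> / \<bar>\<delta>\<bar>" using z(2) by (metis abs_divide abs_of_nonneg)
    then have z_over_\<delta>: "z / \<delta> \<le> B / \<bar>\<delta>\<bar>" using z(1) by (simp add: divide_right_mono)
    define k where "k = nat \<lfloor>z / \<delta>\<rfloor>"
    have k: "real k \<le> z / \<delta>" "z / \<delta> < real k + 1"
      using z(2) by (simp_all add: k_def)
    have "k \<le> K"
      unfolding k_def K_def using z_over_\<delta>
      by (intro nat_mono order.trans[OF floor_mono floor_le_ceiling])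
    have "\<bar>z - real k * \<delta>\<bar> = \<bar>z / \<delta> - real k\<bar> * \<bar>\<delta>\<bar>"
      using \<delta>_nz by (simp add: abs_mult[symmetric] algebra_simps)
    also have "\<dots> \<le> 1 * \<bar>\<delta>\<bar>" using k by (intro mult_right_mono) auto
    finally have close: "\<bar>z - real k * \<delta>\<bar> \<le> \<epsilon>" using \<delta>_small by linarith
    define i where "i = \<lfloor>x / B\<rfloor> + (if \<delta> > 0 then 0 else 1) - int k * p"
    have x_eq: "x = B * of_int \<lfloor>x / B\<rfloor> + B * frac (x / B)"
      using B by (simp add: frac_def algebra_simps)
    have "x - real (nat q * k) * A - of_int i * B = z - real k * \<delta>"
      using q by (subst x_eq) (simp add: z_def i_def \<delta>_def algebra_simps)
    moreover have "nat q * k < nat q * K + 1"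
      using \<open>k \<le> K\<close> by (simp add: less_Suc_eq_le)
    ultimately show "\<exists>j<nat q * K + 1. \<exists>i::int. \<bar>x - real j * A - of_int i * B\<bar> \<le> \<epsilon>"
      using close by metis
  qed
qed

definition orbit_mean :: "(nat \<Rightarrow> real) \<Rightarrow> (real \<Rightarrow> real) \<Rightarrow> real \<Rightarrow> nat \<Rightarrow> real \<Rightarrow> real" where
  "orbit_mean w G a N s = (\<Sum>n<N. w n * G (s + real n * a)) / real N"

definition riemann_mean :: "(real \<Rightarrow> real) \<Rightarrow> real \<Rightarrow> nat \<Rightarrow> real \<Rightarrow> real" where
  "riemann_mean G B R u = orbit_mean (\<lambda>_. 1) G (B / real R) R u"

definition cesaro_mean :: "(nat \<Rightarrow> real) \<Rightarrow> nat \<Rightarrow> real" where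
  "cesaro_mean w N = (\<Sum>n<N. w n) / real N"

lemma abs_mean_le:
  fixes f :: "nat \<Rightarrow> real"
  assumes "\<And>n. n < N \<Longrightarrow> \<bar>f n\<bar> \<le> K" and "0 \<le> K"
  shows "\<bar>(\<Sum>n<N. f n) / real N\<bar> \<le> K"
proof (cases "N = 0")
  case False
  have "\<bar>\<Sum>n<N. f n\<bar> \<le> (\<Sum>n<N. \<bar>f n\<bar>)" by (rule sum_abs)
  also have "\<dots> \<le> real N * K" using sum_bounded_above[of "{..<N}" "\<lambda>n. \<bar>f n\<bar>" K] assms(1) by simp
  finally show ?thesis using False by (simp add: abs_divide divide_le_eq mult.commute)
qed (use assms in simp)

lemma sum_lessThan_add:
  fixes f :: "nat \<Rightarrow> 'a::comm_monoid_add"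
  shows "(\<Sum>n<m + k. f n) = (\<Sum>n<m. f n) + (\<Sum>n<k. f (m + n))"
  by (induction k) (simp_all add: add.assoc)

lemma cesaro_mean_periodic_tendsto:
  fixes w :: "nat \<Rightarrow> real"
  assumes P: "P > 0" and periodic: "\<And>n. w (n + P) = w n"
  shows "cesaro_mean w \<longlonglongrightarrow> (\<Sum>n<P. w n) / real P"
proof -
  define W where "W = (\<Sum>n<P. w n)"
  define K where "K = (\<Sum>n<P. \<bar>w n\<bar>)"
  have shift: "w (q * P + n) = w n" for q n
  proof (induction q)
    case (Suc q)
    have "Suc q * P + n = (q * P + n) + P" by simp
    then show ?case using Suc periodic by metis
  qed simp
  have full_periods: "(\<Sum>n<q * P. w n) = real q * W" for q
    by (induction q) (simp_all add: sum_lessThan_add periodic W_def algebra_simps)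
  have error: "\<bar>cesaro_mean w N - W / real P\<bar> \<le> 2 * K / real N" if "N > 0" for N
  proof -
    define q r where "q = N div P" and "r = N mod P"
    have N: "N = q * P + r" and "r < P" using P by (simp_all add: q_def r_def)
    have partial: "\<bar>\<Sum>n<r. w n\<bar> \<le> K"
      unfolding K_def using \<open>r < P\<close> by (intro order.trans[OF sum_abs sum_mono2]) auto
    have "\<bar>real r * W / real P\<bar> \<le> \<bar>W\<bar>"
      using \<open>r < P\<close> by (simp add: abs_mult divide_le_eq mult.commute mult_left_mono)
    also have "\<bar>W\<bar> \<le> K" unfolding W_def K_def by (rule sum_abs)
    finally have "\<bar>(\<Sum>n<r. w n) - real r * W / real P\<bar> \<le> 2 * K"
      using partial by (intro order.trans[OF abs_triangle_ineq4]) simp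
    moreover have "(\<Sum>n<N. w n) = real q * W + (\<Sum>n<r. w n)"
      unfolding N sum_lessThan_add shift full_periods ..
    then have "cesaro_mean w N - W / real P = ((\<Sum>n<r. w n) - real r * W / real P) / real N"
      using that P unfolding cesaro_mean_def by (simp add: divide_simps) (simp add: N algebra_simps)
    ultimately show ?thesis using that by (simp add: abs_divide divide_right_mono)
  qed
  have "(\<lambda>N. cesaro_mean w N - W / real P) \<longlonglongrightarrow> 0"
  proof (rule Lim_null_comparison)
    show "eventually (\<lambda>N. norm (cesaro_mean w N - W / real P) \<le> 2 * K / real N) sequentially"
      using eventually_gt_at_top[of 0] by eventually_elim (use error in simp)
  qed real_asymp
  then show ?thesis unfolding W_def by (simp add: LIM_zero_iff)
qed

lemma orbit_mean_lipschitz: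
  assumes "\<And>n. \<bar>w n\<bar> \<le> 1" and lipschitz: "\<And>x y. \<bar>G x - G y\<bar> \<le> L * \<bar>x - y\<bar>"
  shows "\<bar>orbit_mean w G a N s - orbit_mean w G a N t\<bar> \<le> L * \<bar>s - t\<bar>"
proof -
  have "orbit_mean w G a N s - orbit_mean w G a N t
      = (\<Sum>n<N. w n * (G (s + real n * a) - G (t + real n * a))) / real N"
    by (simp add: orbit_mean_def diff_divide_distrib sum_subtractf right_diff_distrib)
  also have "\<bar>\<dots>\<bar> \<le> L * \<bar>s - t\<bar>"
  proof (rule abs_mean_le)
    fix n
    have "\<bar>w n * (G (s + real n * a) - G (t + real n * a))\<bar> \<le> 1 * (L * \<bar>s - t\<bar>)"
      unfolding abs_mult using assms(1)[of n] lipschitz[of "s + real n * a" "t + real n * a"]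
      by (intro mult_mono) auto
    then show "\<bar>w n * (G (s + real n * a) - G (t + real n * a))\<bar> \<le> L * \<bar>s - t\<bar>" by simp
  qed (use lipschitz[of s t] in linarith)
  finally show ?thesis .
qed

locale periodic_lipschitz = periodic_fun_simple G B
  for G :: "real \<Rightarrow> real" and B :: real +
  fixes L C :: real
  assumes period_pos: "B > 0"
    and lipschitz: "\<And>x y. \<bar>G x - G y\<bar> \<le> L * \<bar>x - y\<bar>"
    and bounded: "\<And>x. \<bar>G x\<bar> \<le> C"
begin

lemma lipschitz_nonneg: "L \<ge> 0"
  using lipschitz[of 1 0] by simp

lemma bound_nonneg: "C \<ge> 0"
  using bounded[of 0] by simp

lemma orbit_mean_plus_periods: "orbit_mean w G a N (s + of_int i * B) = orbit_mean w G a N s"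
proof -
  have "G (s + of_int i * B + real n * a) = G (s + real n * a)" for n
    using plus_of_int[of "s + real n * a" i] by (simp add: add_ac)
  then show ?thesis by (simp add: orbit_mean_def)
qed

lemma riemann_mean_plus_step:
  assumes "R > 0"
  shows "riemann_mean G B R (u + B / real R) = riemann_mean G B R u"
proof -
  define g where "g r = G (u + real r * (B / real R))" for r
  have "g R = g 0" using assms plus_period[of u] by (simp add: g_def)
  moreover have "(\<Sum>r<Suc R. g r) = g 0 + (\<Sum>r<R. g (Suc r))" by (rule sum.lessThan_Suc_shift)
  ultimately have "(\<Sum>r<R. g (Suc r)) = (\<Sum>r<R. g r)" by simp
  moreover have "G (u + B / real R + real r * (B / real R)) = g (Suc r)" for r
    by (simp add: g_def algebra_simps add_divide_distrib)
  ultimately show ?thesis by (simp add: riemann_mean_def orbit_mean_def g_def)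
qed

lemma riemann_mean_almost_constant:
  assumes R: "R > 0"
  shows "\<bar>riemann_mean G B R u - riemann_mean G B R v\<bar> \<le> L * B / real R"
proof -
  define d where "d = B / real R"
  interpret step: periodic_fun_simple "riemann_mean G B R" d
    by unfold_locales (use riemann_mean_plus_step[OF R] in \<open>simp add: d_def\<close>)
  have "d > 0" using period_pos R by (simp add: d_def)
  define u' where "u' = v + d * frac ((u - v) / d)"
  have "u = u' + of_int \<lfloor>(u - v) / d\<rfloor> * d"
    using \<open>d > 0\<close> by (simp add: u'_def frac_def field_simps)
  then have "riemann_mean G B R u = riemann_mean G B R u'"
    using step.plus_of_int by metis
  moreover have "\<bar>u' - v\<bar> \<le> d"
    using \<open>d > 0\<close> frac_lt_1[of "(u - v) / d"] frac_ge_0[of "(u - v) / d"]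
    by (simp add: u'_def abs_mult)
  moreover have "\<bar>riemann_mean G B R u' - riemann_mean G B R v\<bar> \<le> L * \<bar>u' - v\<bar>"
    unfolding riemann_mean_def by (rule orbit_mean_lipschitz) (simp_all add: lipschitz)
  moreover have "L * \<bar>u' - v\<bar> \<le> L * d"
    using \<open>\<bar>u' - v\<bar> \<le> d\<close> lipschitz_nonneg by (rule mult_left_mono)
  ultimately show ?thesis by (simp add: d_def)
qed

end

locale weighted_orbit = periodic_lipschitz G B L C
  for G :: "real \<Rightarrow> real" and B L C :: real +
  fixes w :: "nat \<Rightarrow> real" and P :: nat
  assumes weight_period_pos: "P > 0"
    and weight_periodic: "\<And>n. w (n + P) = w n"
    and weight_bounded: "\<And>n. \<bar>w n\<bar> \<le> 1"
begin

lemma orbit_mean_plus_weight_period: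
  "\<bar>orbit_mean w G a N (s + real P * a) - orbit_mean w G a N s\<bar> \<le> 2 * real P * C / real N"
proof -
  define h where "h n = w n * G (s + real n * a)" for n
  have h_bounded: "\<bar>h n\<bar> \<le> C" for n
  proof -
    have "\<bar>h n\<bar> \<le> 1 * C"
      unfolding h_def abs_mult by (rule mult_mono) (use weight_bounded bounded in auto)
    then show ?thesis by simp
  qed
  have block: "\<bar>\<Sum>n<P. h (m + n)\<bar> \<le> real P * C" for m
    using abs_mean_le[of P "\<lambda>n. h (m + n)" C] h_bounded bound_nonneg weight_period_pos
    by (simp add: abs_divide divide_le_eq mult.commute)
  \<comment> \<open>Shifting by one weight period moves \<open>P\<close> terms from the front of the sum to its end.\<close>
  have "h (P + n) = w n * G (s + real P * a + real n * a)" for n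
    using weight_periodic[of n] by (simp add: h_def ring_distribs add_ac)
  then have "orbit_mean w G a N (s + real P * a) = (\<Sum>n<N. h (P + n)) / real N"
    by (simp add: orbit_mean_def)
  moreover have "orbit_mean w G a N s = (\<Sum>n<N. h n) / real N"
    by (simp add: orbit_mean_def h_def)
  moreover have "(\<Sum>n<P. h n) + (\<Sum>n<N. h (P + n)) = (\<Sum>n<N. h n) + (\<Sum>n<P. h (N + n))"
    using sum_lessThan_add[of h P N] sum_lessThan_add[of h N P] by (simp add: add.commute)
  ultimately have "orbit_mean w G a N (s + real P * a) - orbit_mean w G a N s
      = ((\<Sum>n<P. h (N + n)) - (\<Sum>n<P. h (0 + n))) / real N"
    by (simp add: diff_divide_distrib[symmetric])
  also have "\<bar>\<dots>\<bar> \<le> 2 * real P * C / real N"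
    using block[of N] block[of 0] abs_triangle_ineq4[of "\<Sum>n<P. h (N + n)" "\<Sum>n<P. h (0 + n)"]
    by (simp add: abs_divide divide_right_mono)
  finally show ?thesis .
qed

lemma orbit_mean_plus_weight_periods:
  "\<bar>orbit_mean w G a N (s + real j * (real P * a)) - orbit_mean w G a N s\<bar>
     \<le> real j * (2 * real P * C / real N)"
proof (induction j)
  case (Suc j)
  have "s + real (Suc j) * (real P * a) = (s + real j * (real P * a)) + real P * a"
    by (simp add: algebra_simps)
  then have "\<bar>orbit_mean w G a N (s + real (Suc j) * (real P * a))
      - orbit_mean w G a N (s + real j * (real P * a))\<bar> \<le> 2 * real P * C / real N"
    using orbit_mean_plus_weight_period by presburger
  moreover have "real (Suc j) * (2 * real P * C / real N)
      = 2 * real P * C / real N + real j * (2 * real P * C / real N)"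
    by (simp add: distrib_right add_divide_distrib)
  ultimately show ?case using Suc.IH by linarith
qed simp

lemma orbit_mean_oscillation_vanishes:
  assumes irr: "real P * a / B \<notin> \<rat>" and \<epsilon>: "\<epsilon> > 0"
  shows "eventually (\<lambda>N. \<forall>s t. \<bar>orbit_mean w G a N s - orbit_mean w G a N t\<bar> \<le> \<epsilon>) sequentially"
proof -
  define \<eta> where "\<eta> = \<epsilon> / (2 * (L + 1))"
  have "\<eta> > 0" using \<epsilon> lipschitz_nonneg by (simp add: \<eta>_def)
  have L\<eta>: "L * \<eta> \<le> \<epsilon> / 2" using \<epsilon> lipschitz_nonneg by (simp add: \<eta>_def field_simps)
  obtain J where J: "\<And>x. \<exists>j<J. \<exists>i::int. \<bar>x - real j * (real P * a) - of_int i * B\<bar> \<le> \<eta>"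
    using irrational_multiples_uniformly_dense[OF irr period_pos \<open>\<eta> > 0\<close>] by blast
  have "(\<lambda>N. real J * (2 * real P * C / real N)) \<longlonglongrightarrow> 0" by real_asymp
  then have "eventually (\<lambda>N. real J * (2 * real P * C / real N) < \<epsilon> / 2) sequentially"
    using \<epsilon> by (intro order_tendstoD(2)) auto
  then show ?thesis
  proof eventually_elim
    case (elim N)
    show ?case
    proof (intro allI)
      fix s t
      obtain j i where "j < J" and ji: "\<bar>(s - t) - real j * (real P * a) - of_int i * B\<bar> \<le> \<eta>"
        using J by blast
      \<comment> \<open>Reach \<open>s\<close> from \<open>t\<close> by \<open>j\<close> weight periods, then \<open>i\<close> periods of \<open>G\<close>,
        then a small Lipschitz step.\<close>
      define t' where "t' = t + real j * (real P * a)"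
      have "\<bar>orbit_mean w G a N s - orbit_mean w G a N (t' + of_int i * B)\<bar>
          \<le> L * \<bar>s - (t' + of_int i * B)\<bar>"
        by (rule orbit_mean_lipschitz) (use weight_bounded lipschitz in auto)
      also have "\<dots> \<le> L * \<eta>"
        using ji lipschitz_nonneg by (intro mult_left_mono) (simp_all add: t'_def algebra_simps)
      finally have "\<bar>orbit_mean w G a N s - orbit_mean w G a N t'\<bar> \<le> \<epsilon> / 2"
        using L\<eta> by (simp add: orbit_mean_plus_periods)
      moreover have "\<bar>orbit_mean w G a N t' - orbit_mean w G a N t\<bar> \<le> \<epsilon> / 2"
      proof -
        have "real j * (2 * real P * C / real N) \<le> real J * (2 * real P * C / real N)"
          using \<open>j < J\<close> bound_nonneg by (intro mult_right_mono) auto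
        then show ?thesis
          using orbit_mean_plus_weight_periods[of a N t j] elim by (simp add: t'_def)
      qed
      ultimately show "\<bar>orbit_mean w G a N s - orbit_mean w G a N t\<bar> \<le> \<epsilon>" by linarith
    qed
  qed
qed

lemma orbit_mean_near_riemann_mean:
  assumes osc: "\<And>s. \<bar>orbit_mean w G a N t - orbit_mean w G a N s\<bar> \<le> \<epsilon>" and R: "R > 0"
  shows "\<bar>orbit_mean w G a N t - cesaro_mean w N * riemann_mean G B R 0\<bar> \<le> \<epsilon> + L * B / real R"
proof -
  define avg where "avg = (\<Sum>r<R. orbit_mean w G a N (t + real r * (B / real R))) / real R"
  \<comment> \<open>Averaging the orbit mean over a grid of shifts is the same as averaging Riemann means
    along the orbit.\<close>
  have swap: "avg = (\<Sum>n<N. w n * riemann_mean G B R (t + real n * a)) / real N"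
    unfolding avg_def riemann_mean_def orbit_mean_def
    by (simp add: sum_divide_distrib sum_distrib_left sum.swap[of _ "{..<R}"] ac_simps)
  have "orbit_mean w G a N t - avg
      = (\<Sum>r<R. orbit_mean w G a N t - orbit_mean w G a N (t + real r * (B / real R))) / real R"
    using R by (simp add: avg_def sum_subtractf diff_divide_distrib)
  also have "\<bar>\<dots>\<bar> \<le> \<epsilon>"
    using osc osc[of t] by (intro abs_mean_le) auto
  finally have near_avg: "\<bar>orbit_mean w G a N t - avg\<bar> \<le> \<epsilon>" .
  have "avg - cesaro_mean w N * riemann_mean G B R 0
      = (\<Sum>n<N. w n * (riemann_mean G B R (t + real n * a) - riemann_mean G B R 0)) / real N"
    by (simp add: swap cesaro_mean_def sum_distrib_right sum_subtractf right_diff_distrib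
        diff_divide_distrib)
  also have "\<bar>\<dots>\<bar> \<le> L * B / real R"
  proof (rule abs_mean_le)
    fix n
    have "\<bar>w n * (riemann_mean G B R (t + real n * a) - riemann_mean G B R 0)\<bar>
        \<le> 1 * (L * B / real R)"
      unfolding abs_mult using weight_bounded riemann_mean_almost_constant[OF R]
      by (intro mult_mono) auto
    then show "\<bar>w n * (riemann_mean G B R (t + real n * a) - riemann_mean G B R 0)\<bar>
        \<le> L * B / real R"
      by simp
  qed (use lipschitz_nonneg period_pos in simp)
  finally show ?thesis using near_avg by linarith
qed

end

text \<open>All Riemann means lie within \<open>O(1/R)\<close> of one fixed orbit mean along an irrational
  rotation, so they form a Cauchy sequence.\<close>

lemma (in periodic_lipschitz) riemann_mean_convergent: "convergent (\<lambda>R. riemann_mean G B R 0)"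
proof -
  obtain \<theta> :: real where "\<theta> \<notin> \<rat>"
    using uncountable_UNIV_real countable_rat by (metis countable_subset subsetI)
  then have irr: "real 1 * (\<theta> * B) / B \<notin> \<rat>" using period_pos by simp
  interpret unweighted: weighted_orbit G B L C "\<lambda>_. 1" 1 by unfold_locales simp_all
  have "Cauchy (\<lambda>R. riemann_mean G B R 0)"
  proof (rule CauchyI)
    fix e :: real assume "e > 0"
    have "eventually (\<lambda>N. N > 0 \<and> (\<forall>s t. \<bar>orbit_mean (\<lambda>_. 1) G (\<theta> * B) N s
        - orbit_mean (\<lambda>_. 1) G (\<theta> * B) N t\<bar> \<le> e / 4)) sequentially"
      using unweighted.orbit_mean_oscillation_vanishes[OF irr, of "e / 4"] \<open>e > 0\<close>
      by (intro eventually_conj eventually_gt_at_top) simp_all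
    then obtain N where "N > 0" and osc: "\<And>s t. \<bar>orbit_mean (\<lambda>_. 1) G (\<theta> * B) N s
        - orbit_mean (\<lambda>_. 1) G (\<theta> * B) N t\<bar> \<le> e / 4"
      using eventually_happens'[OF sequentially_bot] by blast
    define m where "m = orbit_mean (\<lambda>_. 1) G (\<theta> * B) N 0"
    have "(\<lambda>R. L * B / real R) \<longlonglongrightarrow> 0" by real_asymp
    then have "eventually (\<lambda>R. R > 0 \<and> L * B / real R < e / 4) sequentially"
      using \<open>e > 0\<close> by (intro eventually_conj eventually_gt_at_top order_tendstoD(2)) auto
    then obtain M where M: "\<And>R. R \<ge> M \<Longrightarrow> R > 0 \<and> L * B / real R < e / 4"
      unfolding eventually_sequentially by blast
    have near_m: "\<bar>m - riemann_mean G B R 0\<bar> < e / 2" if "R \<ge> M" for R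
    proof -
      have "cesaro_mean (\<lambda>_. 1) N = 1" using \<open>N > 0\<close> by (simp add: cesaro_mean_def)
      then have "\<bar>m - riemann_mean G B R 0\<bar> \<le> e / 4 + L * B / real R"
        using unweighted.orbit_mean_near_riemann_mean[OF osc] M[OF that] by (simp add: m_def)
      then show ?thesis using M[OF that] by linarith
    qed
    show "\<exists>M. \<forall>R\<ge>M. \<forall>R'\<ge>M. norm (riemann_mean G B R 0 - riemann_mean G B R' 0) < e"
    proof (intro exI[of _ M] allI impI)
      fix R R' assume "R \<ge> M" "R' \<ge> M"
      then show "norm (riemann_mean G B R 0 - riemann_mean G B R' 0) < e"
        using near_m[of R] near_m[of R'] unfolding real_norm_def by linarith
    qed
  qed
  then show ?thesis by (simp add: Cauchy_convergent_iff)
qed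

theorem (in weighted_orbit) orbit_mean_tendsto:
  assumes irr: "real P * a / B \<notin> \<rat>"
  shows "(\<lambda>N. orbit_mean w G a N t) \<longlonglongrightarrow> (\<Sum>n<P. w n) / real P * lim (\<lambda>R. riemann_mean G B R 0)"
proof -
  define \<mu> where "\<mu> = lim (\<lambda>R. riemann_mean G B R 0)"
  have \<mu>: "(\<lambda>R. riemann_mean G B R 0) \<longlonglongrightarrow> \<mu>"
    using riemann_mean_convergent by (simp add: convergent_LIMSEQ_iff \<mu>_def)
  have "(\<lambda>N. orbit_mean w G a N t - cesaro_mean w N * \<mu>) \<longlonglongrightarrow> 0"
  proof (rule LIMSEQ_I)
    fix r :: real assume "r > 0"
    obtain N0 where N0: "\<And>N s. N \<ge> N0 \<Longrightarrow> \<bar>orbit_mean w G a N t - orbit_mean w G a N s\<bar> \<le> r / 2"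
      using orbit_mean_oscillation_vanishes[OF irr, of "r / 2"] \<open>r > 0\<close>
      unfolding eventually_sequentially by auto
    have "\<bar>orbit_mean w G a N t - cesaro_mean w N * \<mu>\<bar> \<le> r / 2" if "N \<ge> N0" for N
    proof (rule tendsto_le[OF sequentially_bot])
      show "(\<lambda>R. r / 2 + L * B / real R) \<longlonglongrightarrow> r / 2" by real_asymp
      show "(\<lambda>R. \<bar>orbit_mean w G a N t - cesaro_mean w N * riemann_mean G B R 0\<bar>)
          \<longlonglongrightarrow> \<bar>orbit_mean w G a N t - cesaro_mean w N * \<mu>\<bar>"
        by (intro tendsto_intros \<mu>)
      show "eventually (\<lambda>R. \<bar>orbit_mean w G a N t - cesaro_mean w N * riemann_mean G B R 0\<bar>
          \<le> r / 2 + L * B / real R) sequentially"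
        using eventually_gt_at_top[of 0]
        by eventually_elim (rule orbit_mean_near_riemann_mean[OF N0[OF that]])
    qed
    then show "\<exists>N0. \<forall>N\<ge>N0. norm (orbit_mean w G a N t - cesaro_mean w N * \<mu> - 0) < r"
      using \<open>r > 0\<close> by (intro exI[of _ N0]) force
  qed
  moreover have "cesaro_mean w \<longlonglongrightarrow> (\<Sum>n<P. w n) / real P"
    using weight_period_pos weight_periodic by (rule cesaro_mean_periodic_tendsto)
  ultimately have "(\<lambda>N. (orbit_mean w G a N t - cesaro_mean w N * \<mu>) + cesaro_mean w N * \<mu>)
      \<longlonglongrightarrow> 0 + (\<Sum>n<P. w n) / real P * \<mu>"
    by (intro tendsto_intros)
  then show ?thesis by (simp add: \<mu>_def)
qed

section \<open>Densities from sampled integrals\<close>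

lemma growth_rate_from_samples:
  fixes F :: "real \<Rightarrow> real"
  assumes a: "a > 0"
    and lipschitz: "\<And>x y. 0 \<le> x \<Longrightarrow> x \<le> y \<Longrightarrow> \<bar>F y - F x\<bar> \<le> M * (y - x)"
    and samples: "(\<lambda>N. F (c + real N * a) / real N) \<longlonglongrightarrow> \<sigma>"
  shows "((\<lambda>T. F T / T) \<longlongrightarrow> \<sigma> / a) at_top"
proof -
  define n where "n T = nat \<lfloor>(T - c) / a\<rfloor>" for T
  have n_at_top: "filterlim n at_top at_top"
    unfolding n_def
    by (rule filterlim_compose[OF filterlim_nat_sequentially
          filterlim_compose[OF filterlim_floor_sequentially]]) (use a in real_asymp)
  have n_bounds: "(T - c) / a - 1 < real (n T) \<and> real (n T) \<le> (T - c) / a" if "T \<ge> c" for T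
    using that a by (simp add: n_def)
  have sample_le: "c + real (n T) * a \<le> T \<and> T - a < c + real (n T) * a" if "T \<ge> c" for T
    using n_bounds[OF that] a by (simp add: field_simps)
  have "((\<lambda>T. F (c + real (n T) * a) / real (n T)) \<longlongrightarrow> \<sigma>) at_top"
    using filterlim_compose[OF samples n_at_top] by simp
  moreover have "((\<lambda>T. real (n T) / T) \<longlongrightarrow> 1 / a) at_top"
  proof (rule tendsto_sandwich)
    show "eventually (\<lambda>T. ((T - c) / a - 1) / T \<le> real (n T) / T) at_top"
      using eventually_ge_at_top[of "max c 1"]
    proof eventually_elim
      case (elim T)
      then show ?case using n_bounds[of T] by (intro divide_right_mono) auto
    qed
    show "eventually (\<lambda>T. real (n T) / T \<le> ((T - c) / a) / T) at_top"
      using eventually_ge_at_top[of "max c 1"]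
    proof eventually_elim
      case (elim T)
      then show ?case using n_bounds[of T] by (intro divide_right_mono) auto
    qed
  qed (use a in \<open>real_asymp simp: inverse_eq_divide\<close>)+
  moreover have "((\<lambda>T. (F T - F (c + real (n T) * a)) / T) \<longlongrightarrow> 0) at_top"
  proof (rule Lim_null_comparison)
    show "eventually (\<lambda>T. norm ((F T - F (c + real (n T) * a)) / T) \<le> M * a / T) at_top"
      using eventually_ge_at_top[of "max 1 (max c a)"]
    proof eventually_elim
      case (elim T)
      then have "\<bar>F T - F (c + real (n T) * a)\<bar> \<le> M * (T - (c + real (n T) * a))"
        using sample_le[of T] by (intro lipschitz) auto
      also have "\<dots> \<le> M * a"
        using sample_le[of T] elim lipschitz[of 0 1] by (intro mult_left_mono) auto
      finally show ?case using elim by (simp add: abs_divide divide_right_mono)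
    qed
  qed real_asymp
  ultimately have "((\<lambda>T. F (c + real (n T) * a) / real (n T) * (real (n T) / T)
      + (F T - F (c + real (n T) * a)) / T) \<longlongrightarrow> \<sigma> * (1 / a) + 0) at_top"
    by (intro tendsto_add tendsto_mult)
  moreover have "eventually (\<lambda>T. F (c + real (n T) * a) / real (n T) * (real (n T) / T)
      + (F T - F (c + real (n T) * a)) / T = F T / T) at_top"
    using eventually_ge_at_top[of 1] filterlim_at_top[THEN iffD1, OF n_at_top, rule_format, of 1]
    by eventually_elim (simp add: field_simps)
  ultimately show ?thesis by (simp add: tendsto_cong)
qed

lemma integrable_indicator_Icc:
  "S \<in> sets lebesgue \<Longrightarrow> (indicator S :: real \<Rightarrow> real) integrable_on {a..b}"
  unfolding integrable_on_indicator Int_commute[of S]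
  by (rule fmeasurable_Int_fmeasurable[OF lmeasurable_interval(1)])

lemma integral_indicator_Icc_bounds:
  assumes "S \<in> sets lebesgue" "a \<le> b"
  shows "0 \<le> integral {a..b} (indicator S :: real \<Rightarrow> real)"
    and "integral {a..b} (indicator S :: real \<Rightarrow> real) \<le> b - a"
proof -
  show "0 \<le> integral {a..b} (indicator S :: real \<Rightarrow> real)"
    by (rule integral_nonneg[OF integrable_indicator_Icc[OF assms(1)]]) simp
  have "integral {a..b} (indicator S :: real \<Rightarrow> real) \<le> integral {a..b} (\<lambda>_. 1)"
    by (rule integral_le[OF integrable_indicator_Icc[OF assms(1)]]) (auto simp: indicator_def)
  then show "integral {a..b} (indicator S :: real \<Rightarrow> real) \<le> b - a" using assms(2) by simp
qed

lemma integral_indicator_Icc_combine: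
  assumes "S \<in> sets lebesgue" "a \<le> b" "b \<le> c"
  shows "integral {a..c} (indicator S :: real \<Rightarrow> real)
    = integral {a..b} (indicator S) + integral {b..c} (indicator S)"
  using assms
  by (intro Henstock_Kurzweil_Integration.integral_combine[symmetric] integrable_indicator_Icc)

lemma PT_eq_integral:
  assumes "S \<in> sets lebesgue"
  shows "PT T S = integral {0..T} (indicator S :: real \<Rightarrow> real) / T"
proof -
  have "S \<inter> {0..T} \<in> lmeasurable"
    using fmeasurable_Int_fmeasurable[OF lmeasurable_interval(1) assms] by (simp add: Int_commute)
  then show ?thesis unfolding PT_def by (simp add: integral_indicator)
qed

lemma PT_tendsto_from_samples:
  assumes S: "S \<in> sets lebesgue" and "a > 0"
    and samples: "(\<lambda>N. integral {0..c + real N * a} (indicator S :: real \<Rightarrow> real) / real N)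
      \<longlonglongrightarrow> \<sigma>"
  shows "((\<lambda>T. PT T S) \<longlongrightarrow> \<sigma> / a) at_top"
  unfolding PT_eq_integral[OF S]
proof (rule growth_rate_from_samples[OF \<open>a > 0\<close> _ samples])
  fix x y :: real assume "0 \<le> x" "x \<le> y"
  then show "\<bar>integral {0..y} (indicator S) - integral {0..x} (indicator S :: real \<Rightarrow> real)\<bar>
      \<le> 1 * (y - x)"
    using integral_indicator_Icc_combine[OF S, of 0 x y] integral_indicator_Icc_bounds[OF S, of x y]
    by simp
qed

lemma integral_split_windows:
  fixes h :: "real \<Rightarrow> real"
  assumes h: "\<And>x y. h integrable_on {x..y}" and "0 \<le> c" "0 \<le> a"
  shows "integral {0..c + real N * a} h
    = integral {0..c} h + (\<Sum>n<N. integral {c + real n * a..c + real (Suc n) * a} h)"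
proof (induction N)
  case (Suc N)
  have "integral {0..c + real (Suc N) * a} h
      = integral {0..c + real N * a} h + integral {c + real N * a..c + real (Suc N) * a} h"
    using assms by (intro Henstock_Kurzweil_Integration.integral_combine[symmetric] h)
      (simp_all add: algebra_simps)
  then show ?case using Suc.IH by simp
qed simp

definition window_mass :: "real set \<Rightarrow> real \<Rightarrow> real" where
  "window_mass S x = integral {x - 1/2..x + 1/2} (indicator S)"

lemma window_mass_bounded: "S \<in> sets lebesgue \<Longrightarrow> \<bar>window_mass S x\<bar> \<le> 1"
  using integral_indicator_Icc_bounds[of S "x - 1/2" "x + 1/2"] by (simp add: window_mass_def)

lemma window_mass_lipschitz:
  assumes S: "S \<in> sets lebesgue"
  shows "\<bar>window_mass S x - window_mass S y\<bar> \<le> \<bar>x - y\<bar>"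
proof -
  have "\<bar>window_mass S y - window_mass S x\<bar> \<le> y - x" if "x \<le> y" for x y
  proof -
    have "integral {x - 1/2..y + 1/2} (indicator S)
        = window_mass S x + integral {x + 1/2..y + 1/2} (indicator S)"
      "integral {x - 1/2..y + 1/2} (indicator S)
        = integral {x - 1/2..y - 1/2} (indicator S) + window_mass S y"
      unfolding window_mass_def using that by (simp_all add: integral_indicator_Icc_combine[OF S])
    then show ?thesis
      using that integral_indicator_Icc_bounds[OF S, of "x + 1/2" "y + 1/2"]
        integral_indicator_Icc_bounds[OF S, of "x - 1/2" "y - 1/2"] by simp
  qed
  from this[of x y] this[of y x] show ?thesis by (cases "x \<le> y") (simp_all add: abs_minus_commute)
qed

lemma window_mass_periodic:
  assumes "\<And>x. x + B \<in> S \<longleftrightarrow> x \<in> S"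
  shows "window_mass S (x + B) = window_mass S x"
proof -
  have "window_mass S (x + B)
      = integral {(x + B - 1/2) - B..(x + B + 1/2) - B} (\<lambda>y. indicator S (y + B) :: real)"
    unfolding window_mass_def by (rule integral_shift_real_ivl[symmetric])
  also have "\<dots> = integral {x - 1/2..x + 1/2} (\<lambda>y. indicator S (y + B) :: real)" by simp
  also have "\<dots> = window_mass S x"
    unfolding window_mass_def by (rule integral_cong) (simp add: indicator_def assms)
  finally show ?thesis .
qed

section \<open>Sieved multiples\<close>

definition primorial :: "real \<Rightarrow> nat" where
  "primorial \<gamma> = \<Prod>{p. prime p \<and> real p \<le> \<gamma>}"

lemma finite_primes_le: "finite {p::nat. prime p \<and> real p \<le> \<gamma>}"
  by (rule finite_subset[of _ "{..nat \<lfloor>\<gamma>\<rfloor>}"]) (auto simp: le_nat_floor)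

lemma primorial_pos: "primorial \<gamma> > 0"
  unfolding primorial_def by (rule prod_pos) (auto simp: prime_gt_0_nat)

lemma coprime_primorial_iff:
  "coprime n (primorial \<gamma>) \<longleftrightarrow> (\<forall>p. prime p \<longrightarrow> real p \<le> \<gamma> \<longrightarrow> \<not> p dvd n)"
proof
  assume "coprime n (primorial \<gamma>)"
  moreover have "p dvd primorial \<gamma>" if "prime p" "real p \<le> \<gamma>" for p
    unfolding primorial_def using that finite_primes_le by (intro dvd_prodI) auto
  ultimately show "\<forall>p. prime p \<longrightarrow> real p \<le> \<gamma> \<longrightarrow> \<not> p dvd n"
    by (meson coprime_common_divisor not_prime_unit)
next
  assume "\<forall>p. prime p \<longrightarrow> real p \<le> \<gamma> \<longrightarrow> \<not> p dvd n"
  then show "coprime n (primorial \<gamma>)"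
    unfolding primorial_def
    by (auto intro!: prod_coprime_right simp: prime_imp_coprime coprime_commute)
qed

lemma Pminus_gt_iff_coprime_primorial:
  assumes "n \<ge> 1"
  shows "Pminus n > ereal \<gamma> \<longleftrightarrow> coprime n (primorial \<gamma>)"
proof (cases "n = 1")
  case False
  then have "n > 1" using assms by simp
  then obtain p0 where "p0 \<in> prime_factors n"
    using prime_factor_nat[of n] by (auto simp: in_prime_factors_iff)
  then have ne: "prime_factors n \<noteq> {}" by blast
  have "Pminus n > ereal \<gamma> \<longleftrightarrow> \<gamma> < real (Min (prime_factors n))"
    using \<open>n > 1\<close> by (simp add: Pminus_def)
  also have "\<dots> \<longleftrightarrow> (\<forall>p\<in>prime_factors n. \<gamma> < real p)"
  proof
    assume "\<gamma> < real (Min (prime_factors n))"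
    then show "\<forall>p\<in>prime_factors n. \<gamma> < real p"
      by (metis Min_le finite_set_mset of_nat_le_iff order_less_le_trans)
  qed (use Min_in[OF finite_set_mset ne] in blast)
  also have "\<dots> \<longleftrightarrow> coprime n (primorial \<gamma>)"
    using \<open>n > 1\<close> unfolding coprime_primorial_iff Ball_def in_prime_factors_iff
    by (auto simp: not_le)
  finally show ?thesis .
qed (simp add: Pminus_def)

lemma mem_half_interval_iff: "x \<in> {c - 1/2<..<c + 1/2} \<longleftrightarrow> \<bar>x - c\<bar> < 1/2" for x c :: real
  unfolding greaterThanLessThan_iff abs_less_iff by auto

lemma mem_Nset_iff:
  "x \<in> Nset \<gamma> \<longleftrightarrow> (\<exists>n::nat. n \<ge> 1 \<and> coprime n (primorial \<gamma>) \<and> \<bar>x - real n * \<gamma>\<bar> < 1/2)"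
  unfolding Nset_def UN_iff Bex_def mem_Collect_eq mem_half_interval_iff
  using Pminus_gt_iff_coprime_primorial by blast

lemma open_Nset: "open (Nset \<gamma>)"
  unfolding Nset_def by (intro open_UN ballI open_greaterThanLessThan)

lemma Nset_subset_greaterThan:
  assumes "\<gamma> \<ge> 0"
  shows "Nset \<gamma> \<subseteq> {\<gamma> - 1/2<..}"
proof
  fix x assume "x \<in> Nset \<gamma>"
  then obtain n :: nat where "n \<ge> 1" "\<bar>x - real n * \<gamma>\<bar> < 1/2" unfolding mem_Nset_iff by blast
  moreover have "1 * \<gamma> \<le> real n * \<gamma>" using \<open>n \<ge> 1\<close> assms by (intro mult_right_mono) auto
  ultimately show "x \<in> {\<gamma> - 1/2<..}" unfolding abs_less_iff by simp
qed

definition Nset_periodic :: "real \<Rightarrow> real set" where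
  "Nset_periodic \<gamma> = (\<Union>n \<in> {n::int. coprime n (int (primorial \<gamma>))}.
                {of_int n * \<gamma> - 1/2 <..< of_int n * \<gamma> + 1/2})"

lemma mem_Nset_periodic_iff:
  "x \<in> Nset_periodic \<gamma>
    \<longleftrightarrow> (\<exists>n::int. coprime n (int (primorial \<gamma>)) \<and> \<bar>x - of_int n * \<gamma>\<bar> < 1/2)"
  unfolding Nset_periodic_def UN_iff Bex_def mem_Collect_eq mem_half_interval_iff ..

lemma open_Nset_periodic: "open (Nset_periodic \<gamma>)"
  unfolding Nset_periodic_def by (intro open_UN ballI open_greaterThanLessThan)

lemma Nset_periodic_shift:
  "x + real (primorial \<gamma>) * \<gamma> \<in> Nset_periodic \<gamma> \<longleftrightarrow> x \<in> Nset_periodic \<gamma>"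
proof -
  define P where "P = int (primorial \<gamma>)"
  have coprime_shift: "coprime (n + P) P \<longleftrightarrow> coprime n P" for n :: int
    by (simp add: coprime_iff_gcd_eq_1 gcd_add1)
  have dist_shift:
    "\<bar>(x + real (primorial \<gamma>) * \<gamma>) - of_int (n + P) * \<gamma>\<bar> = \<bar>x - of_int n * \<gamma>\<bar>" for n
    by (simp add: P_def algebra_simps)
  show ?thesis
  proof
    assume "x + real (primorial \<gamma>) * \<gamma> \<in> Nset_periodic \<gamma>"
    then obtain n where "coprime n P" "\<bar>x + real (primorial \<gamma>) * \<gamma> - of_int n * \<gamma>\<bar> < 1/2"
      unfolding mem_Nset_periodic_iff P_def by blast
    then show "x \<in> Nset_periodic \<gamma>"
      using coprime_shift[of "n - P"] dist_shift[of "n - P"]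
      unfolding mem_Nset_periodic_iff P_def[symmetric] by auto
  next
    assume "x \<in> Nset_periodic \<gamma>"
    then obtain n where "coprime n P" "\<bar>x - of_int n * \<gamma>\<bar> < 1/2"
      unfolding mem_Nset_periodic_iff P_def by blast
    then show "x + real (primorial \<gamma>) * \<gamma> \<in> Nset_periodic \<gamma>"
      using coprime_shift[of n] dist_shift[of n]
      unfolding mem_Nset_periodic_iff P_def[symmetric] by metis
  qed
qed

lemma Nset_eq_Nset_periodic:
  assumes "\<gamma> > 0" "x \<ge> 1/2"
  shows "x \<in> Nset \<gamma> \<longleftrightarrow> x \<in> Nset_periodic \<gamma>"
proof
  assume "x \<in> Nset \<gamma>"
  then show "x \<in> Nset_periodic \<gamma>"
    unfolding mem_Nset_iff mem_Nset_periodic_iff by (metis coprime_int_iff of_int_of_nat_eq)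
next
  assume "x \<in> Nset_periodic \<gamma>"
  then obtain n :: int where n: "coprime n (int (primorial \<gamma>))" "\<bar>x - of_int n * \<gamma>\<bar> < 1/2"
    unfolding mem_Nset_periodic_iff by blast
  then have "of_int n * \<gamma> > 0" using assms(2) by linarith
  then have "n \<ge> 1" using assms(1) by (simp add: zero_less_mult_iff)
  then show "x \<in> Nset \<gamma>"
    using n unfolding mem_Nset_iff
    by (intro exI[of _ "nat n"]) (auto simp: coprime_int_iff[symmetric])
qed

text \<open>Index \<open>n\<close> stands for the multiple \<open>(n + 1) \<gamma>\<close>.\<close>

definition sieve_weight :: "real \<Rightarrow> nat \<Rightarrow> real" where
  "sieve_weight \<gamma> n = (if coprime (Suc n) (primorial \<gamma>) then 1 else 0)"

lemma mem_Nset_window_iff: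
  assumes "\<gamma> \<ge> 1" and x: "x \<in> {\<gamma> - 1/2 + real n * \<gamma>..\<gamma> - 1/2 + real (Suc n) * \<gamma>}"
  shows "x \<in> Nset \<gamma> \<longleftrightarrow> coprime (Suc n) (primorial \<gamma>) \<and> \<bar>x - (\<gamma> + real n * \<gamma>)\<bar> < 1/2"
proof
  assume "x \<in> Nset \<gamma>"
  then obtain m where m: "coprime m (primorial \<gamma>)" "\<bar>x - real m * \<gamma>\<bar> < 1/2"
    using mem_Nset_iff by blast
  have Suc_n: "real (Suc n) * \<gamma> = \<gamma> + real n * \<gamma>" by (simp add: algebra_simps)
  have "real m * \<gamma> - real (Suc n) * \<gamma> < \<gamma>" "real (Suc n) * \<gamma> - real m * \<gamma> < \<gamma>"
    using m(2) x Suc_n assms(1) unfolding abs_less_iff atLeastAtMost_iff by linarith+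
  then have "real m - real (Suc n) < 1" "real (Suc n) - real m < 1"
    using assms(1) by (simp_all add: left_diff_distrib[symmetric] mult_less_cancel_right2)
  then have "m = Suc n" by linarith
  then show "coprime (Suc n) (primorial \<gamma>) \<and> \<bar>x - (\<gamma> + real n * \<gamma>)\<bar> < 1/2"
    using m Suc_n by simp
next
  assume "coprime (Suc n) (primorial \<gamma>) \<and> \<bar>x - (\<gamma> + real n * \<gamma>)\<bar> < 1/2"
  then show "x \<in> Nset \<gamma>"
    unfolding mem_Nset_iff by (intro exI[of _ "Suc n"]) (simp add: algebra_simps)
qed

section \<open>Densities of sieved multiples\<close>

lemma sets_lebesgue_Nset: "Nset \<gamma> \<in> sets lebesgue"
  using open_Nset[of \<gamma>] by (auto intro: borel_open)

lemma sets_lebesgue_Nset_periodic: "Nset_periodic \<gamma> \<in> sets lebesgue"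
  using open_Nset_periodic[of \<gamma>] by (auto intro: borel_open)

lemma integral_Nset_Int_window:
  assumes "\<gamma> \<ge> 1" "U \<in> sets lebesgue"
  shows "integral {\<gamma> - 1/2 + real n * \<gamma>..\<gamma> - 1/2 + real (Suc n) * \<gamma>}
      (indicator (Nset \<gamma> \<inter> U)) = sieve_weight \<gamma> n * window_mass U (\<gamma> + real n * \<gamma>)"
proof -
  define c where "c = \<gamma> + real n * \<gamma>"
  define W where "W = {\<gamma> - 1/2 + real n * \<gamma>..\<gamma> - 1/2 + real (Suc n) * \<gamma>}"
  define I where "I = {c - 1/2<..<c + 1/2}"
  have "I \<subseteq> W" using assms(1) by (auto simp: I_def W_def c_def algebra_simps)
  have "integral W (indicator (Nset \<gamma> \<inter> U) :: real \<Rightarrow> real)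
      = integral W (\<lambda>x. if x \<in> I then sieve_weight \<gamma> n * indicator U x else 0)"
  proof (rule integral_cong)
    fix x assume "x \<in> W"
    then have "x \<in> Nset \<gamma> \<longleftrightarrow> coprime (Suc n) (primorial \<gamma>) \<and> x \<in> I"
      using mem_Nset_window_iff[OF assms(1)] unfolding W_def I_def c_def mem_half_interval_iff
      by blast
    then show "indicator (Nset \<gamma> \<inter> U) x
        = (if x \<in> I then sieve_weight \<gamma> n * indicator U x else 0)"
      by (simp add: sieve_weight_def indicator_def)
  qed
  also have "\<dots> = integral (I \<inter> W) (\<lambda>x. sieve_weight \<gamma> n * indicator U x)"
    by (rule Henstock_Kurzweil_Integration.integral_restrict_Int)
  also have "I \<inter> W = I" using \<open>I \<subseteq> W\<close> by blast
  also have "integral I (\<lambda>x. sieve_weight \<gamma> n * indicator U x)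
      = sieve_weight \<gamma> n * window_mass U c"
    by (simp add: I_def window_mass_def integral_open_interval_real)
  finally show ?thesis by (simp add: W_def c_def)
qed

lemma integral_Nset_Int_samples:
  assumes "\<gamma> \<ge> 1" "U \<in> sets lebesgue"
  shows "integral {0..\<gamma> - 1/2 + real N * \<gamma>} (indicator (Nset \<gamma> \<inter> U)) / real N
    = orbit_mean (sieve_weight \<gamma>) (window_mass U) \<gamma> N \<gamma>"
proof -
  have S: "Nset \<gamma> \<inter> U \<in> sets lebesgue" using sets_lebesgue_Nset assms(2) by blast
  have "integral {0..\<gamma> - 1/2} (indicator (Nset \<gamma> \<inter> U) :: real \<Rightarrow> real)
      = integral {0..\<gamma> - 1/2} (\<lambda>_. 0)"
    by (rule integral_cong)
      (use Nset_subset_greaterThan[of \<gamma>] assms(1) in \<open>auto simp: indicator_def\<close>)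
  then show ?thesis
    using assms by (simp add: integral_split_windows[OF integrable_indicator_Icc[OF S]]
        integral_Nset_Int_window orbit_mean_def del: of_nat_Suc)
qed

lemma sieve_weight_periodic: "sieve_weight \<gamma> (n + primorial \<gamma>) = sieve_weight \<gamma> n"
  by (simp add: sieve_weight_def coprime_iff_gcd_eq_1 gcd_add1 flip: add_Suc)

lemma abs_sieve_weight_le: "\<bar>sieve_weight \<gamma> n\<bar> \<le> 1"
  by (simp add: sieve_weight_def)

definition sieve_density :: "real \<Rightarrow> real" where
  "sieve_density \<gamma> = (\<Sum>n<primorial \<gamma>. sieve_weight \<gamma> n) / real (primorial \<gamma>)"

lemma sieve_density_pos: "sieve_density \<gamma> > 0"
proof -
  have "sieve_weight \<gamma> 0 \<le> (\<Sum>n<primorial \<gamma>. sieve_weight \<gamma> n)"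
    using primorial_pos[of \<gamma>] by (intro member_le_sum) (auto simp: sieve_weight_def)
  then show ?thesis using primorial_pos[of \<gamma>] by (simp add: sieve_density_def sieve_weight_def)
qed

lemma PT_Nset_tendsto:
  assumes "\<gamma> \<ge> 1"
  shows "((\<lambda>T. PT T (Nset \<gamma>)) \<longlongrightarrow> sieve_density \<gamma> / \<gamma>) at_top"
proof (rule PT_tendsto_from_samples)
  show "Nset \<gamma> \<in> sets lebesgue" by (rule sets_lebesgue_Nset)
  have "integral {0..\<gamma> - 1/2 + real N * \<gamma>} (indicator (Nset \<gamma>)) / real N
      = cesaro_mean (sieve_weight \<gamma>) N" for N
    using integral_Nset_Int_samples[OF assms, of UNIV N]
    by (simp add: orbit_mean_def cesaro_mean_def window_mass_def)
  then show "(\<lambda>N. integral {0..\<gamma> - 1/2 + real N * \<gamma>} (indicator (Nset \<gamma>)) / real N)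
      \<longlonglongrightarrow> sieve_density \<gamma>"
    using cesaro_mean_periodic_tendsto[of "primorial \<gamma>" "sieve_weight \<gamma>"]
    by (simp add: primorial_pos sieve_weight_periodic sieve_density_def)
qed (use assms in simp)

lemma window_mass_Nset:
  assumes "\<beta> > 0" "x \<ge> 1"
  shows "window_mass (Nset \<beta>) x = window_mass (Nset_periodic \<beta>) x"
  unfolding window_mass_def
  by (rule integral_cong) (use assms Nset_eq_Nset_periodic in \<open>simp add: indicator_def\<close>)

lemma weighted_orbit_window_mass:
  assumes "\<beta> > 0" "P > 0" "\<And>n. w (n + P) = w n" "\<And>n. \<bar>w n\<bar> \<le> 1"
  shows "weighted_orbit (window_mass (Nset_periodic \<beta>)) (real (primorial \<beta>) * \<beta>) 1 1 w P"
proof -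
  note S = sets_lebesgue_Nset_periodic[of \<beta>]
  show ?thesis
    by unfold_locales (use assms primorial_pos in \<open>simp_all add: window_mass_periodic
        Nset_periodic_shift window_mass_lipschitz[OF S] window_mass_bounded[OF S]\<close>)
qed

definition mean_window_mass :: "real \<Rightarrow> real" where
  "mean_window_mass \<beta>
    = lim (\<lambda>R. riemann_mean (window_mass (Nset_periodic \<beta>)) (real (primorial \<beta>) * \<beta>) R 0)"

lemma PT_Nset_tendsto_mean_window_mass:
  assumes "\<beta> \<ge> 1" "\<beta> \<notin> \<rat>"
  shows "((\<lambda>T. PT T (Nset \<beta>)) \<longlongrightarrow> mean_window_mass \<beta>) at_top"
proof -
  interpret weighted_orbit "window_mass (Nset_periodic \<beta>)" "real (primorial \<beta>) * \<beta>" 1 1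
      "\<lambda>_. 1" 1
    by (rule weighted_orbit_window_mass) (use assms in auto)
  have irr: "1 / (real (primorial \<beta>) * \<beta>) \<notin> \<rat>"
  proof
    assume "1 / (real (primorial \<beta>) * \<beta>) \<in> \<rat>"
    then have "inverse (real (primorial \<beta>) * (1 / (real (primorial \<beta>) * \<beta>))) \<in> \<rat>"
      by (intro Rats_inverse Rats_mult) auto
    then show False using assms(2) primorial_pos[of \<beta>] by simp
  qed
  note S = sets_lebesgue_Nset[of \<beta>]
  have "integral {0..1/2} (indicator (Nset \<beta>) :: real \<Rightarrow> real)
      = integral {0..1/2::real} (\<lambda>_. 0 :: real)"
    by (rule integral_cong)
      (use Nset_subset_greaterThan[of \<beta>] assms(1) in \<open>auto simp: indicator_def\<close>)
  moreover have "integral {1/2 + real n * 1..1/2 + real (Suc n) * 1} (indicator (Nset \<beta>))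
      = window_mass (Nset_periodic \<beta>) (1 + real n * 1)" for n
    using window_mass_Nset[of \<beta> "1 + real n"] assms(1) by (simp add: window_mass_def algebra_simps)
  ultimately have "integral {0..1/2 + real N * 1} (indicator (Nset \<beta>)) / real N
      = orbit_mean (\<lambda>_. 1) (window_mass (Nset_periodic \<beta>)) 1 N 1" for N
    using integral_split_windows[OF integrable_indicator_Icc[OF S], of "1/2" 1 N]
    by (simp add: orbit_mean_def)
  moreover have "(\<lambda>N. orbit_mean (\<lambda>_. 1) (window_mass (Nset_periodic \<beta>)) 1 N 1)
      \<longlonglongrightarrow> mean_window_mass \<beta>"
    using orbit_mean_tendsto[of 1 1] irr by (simp add: mean_window_mass_def)
  ultimately show ?thesis
    using PT_tendsto_from_samples[OF S, of 1 "1/2" "mean_window_mass \<beta>"] by simp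
qed

lemma PT_Nset_Int_tendsto:
  assumes "\<alpha> \<ge> 1" "\<beta> \<ge> 1" "\<alpha> / \<beta> \<notin> \<rat>"
  shows "((\<lambda>T. PT T (Nset \<alpha> \<inter> Nset \<beta>))
    \<longlongrightarrow> sieve_density \<alpha> * mean_window_mass \<beta> / \<alpha>) at_top"
proof -
  interpret weighted_orbit "window_mass (Nset_periodic \<beta>)" "real (primorial \<beta>) * \<beta>" 1 1
      "sieve_weight \<alpha>" "primorial \<alpha>"
    by (rule weighted_orbit_window_mass)
      (use assms primorial_pos sieve_weight_periodic abs_sieve_weight_le in auto)
  have irr: "real (primorial \<alpha>) * \<alpha> / (real (primorial \<beta>) * \<beta>) \<notin> \<rat>"
  proof
    assume "real (primorial \<alpha>) * \<alpha> / (real (primorial \<beta>) * \<beta>) \<in> \<rat>"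
    then have "real (primorial \<beta>) / real (primorial \<alpha>)
        * (real (primorial \<alpha>) * \<alpha> / (real (primorial \<beta>) * \<beta>)) \<in> \<rat>"
      by (intro Rats_mult[OF Rats_divide[OF Rats_of_nat Rats_of_nat]])
    also have "real (primorial \<beta>) / real (primorial \<alpha>)
        * (real (primorial \<alpha>) * \<alpha> / (real (primorial \<beta>) * \<beta>)) = \<alpha> / \<beta>"
      using primorial_pos[of \<alpha>] primorial_pos[of \<beta>] by (simp add: field_simps)
    finally show False using assms(3) by simp
  qed
  note S = sets_lebesgue_Nset[of \<beta>]
  have "window_mass (Nset \<beta>) (\<alpha> + real n * \<alpha>)
      = window_mass (Nset_periodic \<beta>) (\<alpha> + real n * \<alpha>)" for n
    using assms(1,2) by (intro window_mass_Nset) (auto intro: add_increasing2)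
  then have "integral {0..\<alpha> - 1/2 + real N * \<alpha>} (indicator (Nset \<alpha> \<inter> Nset \<beta>)) / real N
      = orbit_mean (sieve_weight \<alpha>) (window_mass (Nset_periodic \<beta>)) \<alpha> N \<alpha>" for N
    by (simp add: integral_Nset_Int_samples[OF assms(1) S] orbit_mean_def)
  moreover have "(\<lambda>N. orbit_mean (sieve_weight \<alpha>) (window_mass (Nset_periodic \<beta>)) \<alpha> N \<alpha>)
      \<longlonglongrightarrow> sieve_density \<alpha> * mean_window_mass \<beta>"
    using orbit_mean_tendsto[OF irr] by (simp add: sieve_density_def mean_window_mass_def)
  moreover have "Nset \<alpha> \<inter> Nset \<beta> \<in> sets lebesgue" using sets_lebesgue_Nset by blast
  ultimately show ?thesis
    using assms(1) by (intro PT_tendsto_from_samples[where c = "\<alpha> - 1/2"]) simp_all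
qed

lemma PT_Nset_Int_asymp_equiv:
  assumes "\<alpha> \<ge> 1" "\<beta> \<ge> 1" "\<alpha> / \<beta> \<notin> \<rat>" "\<beta> \<notin> \<rat>"
  shows "(\<lambda>T. PT T (Nset \<alpha> \<inter> Nset \<beta>)) \<sim>[at_top] (\<lambda>T. PT T (Nset \<alpha>) * PT T (Nset \<beta>))"
proof (rule asymp_equivI')
  \<comment> \<open>Computing the density of \<open>Nset \<beta>\<close> both by sieve weights and by orbit means identifies the
    mean window mass.\<close>
  have mean: "mean_window_mass \<beta> = sieve_density \<beta> / \<beta>"
    using tendsto_unique[OF _ PT_Nset_tendsto_mean_window_mass PT_Nset_tendsto] assms by simp
  have "((\<lambda>T. PT T (Nset \<alpha> \<inter> Nset \<beta>) / (PT T (Nset \<alpha>) * PT T (Nset \<beta>)))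
      \<longlongrightarrow> (sieve_density \<alpha> * mean_window_mass \<beta> / \<alpha>)
        / (sieve_density \<alpha> / \<alpha> * (sieve_density \<beta> / \<beta>))) at_top"
    using assms sieve_density_pos[of \<alpha>] sieve_density_pos[of \<beta>]
    by (intro tendsto_divide tendsto_mult PT_Nset_Int_tendsto PT_Nset_tendsto) auto
  then show "((\<lambda>T. PT T (Nset \<alpha> \<inter> Nset \<beta>) / (PT T (Nset \<alpha>) * PT T (Nset \<beta>)))
      \<longlongrightarrow> 1) at_top"
    using assms sieve_density_pos[of \<alpha>] sieve_density_pos[of \<beta>] by (simp add: mean)
qed

theorem lemma2p8:
  fixes \<alpha> \<beta> :: real
  assumes "\<alpha> \<ge> 1" and "\<beta> \<ge> 1" and "\<alpha> / \<beta> \<notin> \<rat>"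
  shows "(\<lambda>T. PT T (Nset \<alpha> \<inter> Nset \<beta>)) \<sim>[at_top] (\<lambda>T. PT T (Nset \<alpha>) * PT T (Nset \<beta>))"
proof (cases "\<beta> \<in> \<rat>")
  case False
  then show ?thesis using PT_Nset_Int_asymp_equiv[OF assms] by blast
next
  case True
  then have "\<alpha> \<notin> \<rat>" using assms(3) Rats_divide by blast
  moreover have "\<beta> / \<alpha> \<notin> \<rat>" using assms(3) by (metis Rats_inverse inverse_divide)
  ultimately have
    "(\<lambda>T. PT T (Nset \<beta> \<inter> Nset \<alpha>)) \<sim>[at_top] (\<lambda>T. PT T (Nset \<beta>) * PT T (Nset \<alpha>))"
    using assms by (intro PT_Nset_Int_asymp_equiv) auto
  then show ?thesis by (simp add: Int_commute mult.commute)
qed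

end
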